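(* Let $p$ be a prime, $m,n\ge0$ integers and $a,b,c,d\ge0$ integers (assumed positive if $p=2$). (1) If $p^m\frac{p^a+1}{p^b+1}=p^n\frac{p^c+1}{p^d+1}\in\mathbb Z_{>0}$, then $m=n$ and either ($a=b$ and $c=d$) or ($a=c$ and $b=d$). (2) If $p^m\frac{p^a-1}{p^b+1}=p^n\frac{p^c-1}{p^d+1}\in\mathbb Z_{>0}$, then $m=n$, $a=c$ and $b=d$. (3) If $p^m\frac{p^a+1}{p^b+1}=p^n\frac{p^c-1}{p^d+1}\in\mathbb Z_{>0}$, then $m=n$ and either $p=2$ and ($a=b$, $c=2$, $d=1$, or $(a,b,c,d)=(3,1,4,2)$), or $p=3$ and ($a=b$, $c=1$, $d=0$, or $(a,b,c,d)=(1,0,2,1)$). (4) If $p^m(p^a+1)=p^n\frac{p^c+1}{p^d+1}\in\mathbb Z_{>0}$, then $m=n$ and either $p=3$ and $(a,c,d)=(0,1,0)$, or $p=2$ and $(a,c,d)=(1,3,1)$. (5) If $p^m(p^a+1)=p^n\frac{p^c-1}{p^d+1}\in\mathbb Z_{>0}$, then $m=n$ and either $p=5$ and $(a,c,d)=(0,1,0)$, or $p=3$ and $(a,c,d)\in\{(0,2,1),(1,2,0)\}$, or $p=2$ and $(a,c,d)\in\{(1,4,2),(2,4,1)\}$. *)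

theory Defs
  imports Complex_Main "HOL-Computational_Algebra.Primes"
begin

end

theory Submission
  imports Defs
begin

text \<open>
  Clearing denominators turns each identity into \<open>p ^ m * X = p ^ n * Y\<close> with \<open>X\<close> and
  \<open>Y\<close> prime to \<open>p\<close> (for \<open>p = 2\<close> this is why the exponents must be positive), so
  \<open>m = n\<close> and \<open>X = Y\<close>, an exponential equation in powers of \<open>p\<close>. These equations are
  solved by comparing \<open>p\<close>-adic valuations: after removing the largest power of \<open>p\<close>
  dividing all but one of the summands, that summand would have to be divisible by \<open>p\<close> as
  well. In (2) and (3) integrality makes the two quotients a common integer \<open>r\<close>. In (2) this
  forces \<open>p ^ a\<close> to divide \<open>r * p ^ b < p ^ a\<close> unless \<open>b = d\<close>; in (3) reducing
  modulo \<open>p\<close> leaves only \<open>p \<in> {2, 3}\<close>, where reductions modulo \<open>16\<close> and \<open>9\<close>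
  single out the two sporadic solutions.
\<close>

section \<open>Divisibility of powers\<close>

lemma dvd_pow_plus_one_iff:
  fixes p a :: nat
  assumes "1 < p"
  shows "p dvd p ^ a + 1 \<longleftrightarrow> p = 2 \<and> a = 0"
proof (cases a)
  case 0
  then show ?thesis using assms by (auto dest: dvd_imp_le)
next
  case (Suc k)
  then have "p dvd p ^ a" by simp
  then have "p dvd p ^ a + 1 \<longleftrightarrow> p dvd 1" by (rule dvd_add_right_iff)
  then show ?thesis using assms Suc by simp
qed

lemma coprime_pow_minus_one:
  fixes p a :: nat
  assumes "0 < p" "0 < a"
  shows "coprime p (p ^ a - 1)"
proof -
  have "coprime (p ^ a) (p ^ a - 1)" by (rule coprime_diff_one_right_nat) (use assms in simp)
  then show ?thesis using assms(2) by (metis coprime_power_left_iff not_gr0)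
qed

lemma dvd_prime_imp_eq:
  fixes p q :: nat
  assumes "1 < p" "prime q" "p dvd q"
  shows "p = q"
  using assms by (auto simp: prime_nat_iff)

lemma pow_eq_prime_imp:
  fixes p q c :: nat
  assumes p: "1 < p" and q: "prime q" and eq: "p ^ c = q"
  shows "p = q \<and> c = 1"
proof -
  have "c \<noteq> 0"
  proof
    assume "c = 0"
    with eq q show False by (metis not_prime_1 power_0)
  qed
  then have "p dvd q" using eq by (auto intro: dvd_power)
  then have "p = q" by (rule dvd_prime_imp_eq[OF p q])
  moreover from this have "c = 1" using eq p by (metis power_inject_exp power_one_right)
  ultimately show ?thesis by simp
qed

lemma pow_dvd_pow_of_le:
  fixes p k c :: nat
  assumes "1 < p" "p ^ k \<le> p ^ c"
  shows "p ^ k dvd p ^ c"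
  using assms by (simp add: le_imp_power_dvd)

lemma pow_Suc_dvd_pow_mult_iff:
  fixes p k x :: nat
  assumes "0 < p"
  shows "p ^ Suc k dvd p ^ k * x \<longleftrightarrow> p dvd x"
  using assms by (simp add: nat_mult_dvd_cancel1 mult.commute[of p])

lemma pow_mult_eq_pow_mult_cancel:
  fixes p m n X Y :: nat
  assumes "0 < p" "\<not> p dvd X" "\<not> p dvd Y" "p ^ m * X = p ^ n * Y"
  shows "m = n \<and> X = Y"
proof -
  have less: False if "p ^ m * X = p ^ n * Y" "\<not> p dvd X" "m < n" for m n X Y
  proof -
    have "p ^ m * X = p ^ m * (p ^ (n - m) * Y)"
      using that by (simp flip: power_add mult.assoc)
    then have "X = p ^ (n - m) * Y" using \<open>0 < p\<close> by simp
    then show False using that by simp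
  qed
  have "m = n" using less[of m X n Y] less[of n Y m X] assms by (metis linorder_neqE_nat)
  then show ?thesis using assms by simp
qed

section \<open>Exponential equations in powers of \<open>p\<close>\<close>

lemma pow_plus_one_mult_eq_of_min:
  fixes p a b c d :: nat
  assumes p: "1 < p" and min: "d \<le> a" "d \<le> b" "d \<le> c"
    and eq: "(p ^ a + 1) * (p ^ d + 1) = (p ^ c + 1) * (p ^ b + 1)"
  shows "(a = c \<and> b = d) \<or> (a = b \<and> c = d)"
proof -
  consider "b = d" | "c = d" | "d < b" "d < c" "a = d" | "d < b" "d < c" "d < a"
    using min by linarith
  then show ?thesis
  proof cases
    case 1
    then have "p ^ a + 1 = p ^ c + 1" using eq by (metis mult_right_cancel add_is_0 one_neq_zero)
    then show ?thesis using 1 p by simp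
  next
    case 2
    then have "p ^ a + 1 = p ^ b + 1" using eq by (metis mult.commute mult_right_cancel add_is_0 one_neq_zero)
    then show ?thesis using 2 p by simp
  next
    case 3
    then have "p ^ d < p ^ b" "p ^ d < p ^ c" using p by simp_all
    then have "(p ^ d + 1) * (p ^ d + 1) < (p ^ c + 1) * (p ^ b + 1)"
      by (intro mult_strict_mono) auto
    then show ?thesis using eq 3 by simp
  next
    case 4
    \<comment> \<open>Apart from the constant terms, only \<open>p ^ d\<close> escapes divisibility by \<open>p ^ Suc d\<close>.\<close>
    have dvd: "p ^ Suc d dvd p ^ k" if "d < k" for k
      using that by (intro le_imp_power_dvd) simp
    have "p ^ a * p ^ d + p ^ a + p ^ d = p ^ c * p ^ b + p ^ c + p ^ b"
      using eq by (simp add: algebra_simps)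
    moreover have "p ^ Suc d dvd p ^ c * p ^ b + p ^ c + p ^ b"
      using dvd 4 by simp
    moreover have "p ^ Suc d dvd p ^ a * p ^ d + p ^ a"
      using dvd 4 by simp
    ultimately have "p ^ Suc d dvd p ^ d"
      by (metis dvd_add_right_iff)
    then show ?thesis using p by (simp add: dvd_power_iff_le)
  qed
qed

lemma pow_plus_one_mult_eq_cases:
  fixes p a b c d :: nat
  assumes p: "1 < p" and eq: "(p ^ a + 1) * (p ^ d + 1) = (p ^ c + 1) * (p ^ b + 1)"
  shows "(a = c \<and> b = d) \<or> (a = b \<and> c = d)"
proof -
  consider "d \<le> a" "d \<le> b" "d \<le> c" | "a \<le> b" "a \<le> c" "a \<le> d"
    | "b \<le> a" "b \<le> c" "b \<le> d" | "c \<le> a" "c \<le> b" "c \<le> d"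
    by linarith
  then show ?thesis
  proof cases
    case 1
    then show ?thesis using pow_plus_one_mult_eq_of_min[OF p _ _ _ eq] by blast
  next
    case 2
    have "(p ^ d + 1) * (p ^ a + 1) = (p ^ c + 1) * (p ^ b + 1)"
      using eq by (simp only: mult.commute)
    then show ?thesis using pow_plus_one_mult_eq_of_min[OF p] 2 by blast
  next
    case 3
    have "(p ^ c + 1) * (p ^ b + 1) = (p ^ a + 1) * (p ^ d + 1)"
      using eq by (simp only: eq_commute)
    then show ?thesis using pow_plus_one_mult_eq_of_min[OF p] 3 by blast
  next
    case 4
    have "(p ^ b + 1) * (p ^ c + 1) = (p ^ a + 1) * (p ^ d + 1)"
      using eq by (simp only: mult.commute eq_commute)
    then show ?thesis using pow_plus_one_mult_eq_of_min[OF p] 4 by blast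
  qed
qed

lemma pow_eq_Suc_mult_pow_plus_one_le:
  fixes p r a b c d :: nat
  assumes p: "1 < p" and "0 < r"
    and ea: "p ^ a = r * (p ^ b + 1) + 1" and ec: "p ^ c = r * (p ^ d + 1) + 1"
  shows "d \<le> b"
proof (rule ccontr)
  assume "\<not> d \<le> b"
  define e where "e = d - b"
  have "0 < e" using \<open>\<not> d \<le> b\<close> by (simp add: e_def)
  have "p ^ d = p ^ b * p ^ e" using \<open>\<not> d \<le> b\<close> by (simp add: e_def flip: power_add)
  moreover have "r * p ^ b \<le> r * p ^ b * p ^ e" using p by simp
  ultimately have c_eq: "p ^ c = p ^ a + r * p ^ b * (p ^ e - 1)"
    using ea ec by (simp add: diff_mult_distrib2 algebra_simps)
  then have "p ^ a \<le> p ^ c" by simp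
  then have "p ^ a dvd p ^ c" using p by (simp add: le_imp_power_dvd)
  then have "p ^ a dvd r * p ^ b * (p ^ e - 1)" by (metis c_eq dvd_add_right_iff dvd_refl)
  moreover have "coprime (p ^ a) (p ^ e - 1)"
    using coprime_pow_minus_one[of p e] p \<open>0 < e\<close> by simp
  ultimately have "p ^ a dvd r * p ^ b" by (simp add: coprime_dvd_mult_left_iff)
  then have "p ^ a \<le> r * p ^ b" using \<open>0 < r\<close> p by (simp add: dvd_imp_le)
  then show False using ea by (simp add: algebra_simps)
qed

lemma pow_eq_Suc_mult_pow_plus_one_inj:
  fixes p r a b c d :: nat
  assumes "1 < p" "0 < r"
    and "p ^ a = r * (p ^ b + 1) + 1" "p ^ c = r * (p ^ d + 1) + 1"
  shows "a = c \<and> b = d"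
proof -
  have "b = d"
    using pow_eq_Suc_mult_pow_plus_one_le[of p r a b c d]
      pow_eq_Suc_mult_pow_plus_one_le[of p r c d a b] assms by simp
  moreover from this have "p ^ a = p ^ c" using assms by simp
  ultimately show ?thesis using assms(1) by simp
qed

lemma mult_pow_plus_one_eq_pow_plus_one:
  fixes p a c d :: nat
  assumes p: "1 < p" and "a \<le> d" and eq: "(p ^ a + 1) * (p ^ d + 1) = p ^ c + 1"
  shows "(p = 3 \<and> a = 0 \<and> c = 1 \<and> d = 0) \<or> (p = 2 \<and> a = 1 \<and> c = 3 \<and> d = 1)"
proof -
  have eq': "p ^ a * p ^ d + p ^ a + p ^ d = p ^ c" using eq by (simp add: algebra_simps)
  have dvd: "p ^ k dvd p ^ l" if "k \<le> l" for k l using that by (rule le_imp_power_dvd)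
  consider "a = 0" "d = 0" | "a = 0" "0 < d" | "0 < a" "a < d" | "0 < a" "a = d"
    using \<open>a \<le> d\<close> by linarith
  then show ?thesis
  proof cases
    case 1
    then have "p ^ c = 3" using eq' by simp
    then show ?thesis using pow_eq_prime_imp[OF p, of 3 c] 1 by simp
  next
    case 2
    then have sum: "2 * p ^ d + 1 = p ^ c" using eq' by simp
    then have "0 < c" using p by (cases c) auto
    then have "p dvd 2 * p ^ d + 1" "p dvd 2 * p ^ d" using sum 2 by simp_all
    then have "p dvd 1" by (metis dvd_add_right_iff)
    then show ?thesis using p by simp
  next
    case 3
    have "0 < p ^ a" using p by simp
    then have "p ^ a * p ^ d < p ^ c" using eq' by linarith
    then have "a + d < c" using p by (simp flip: power_add)
    then have "p ^ Suc a dvd p ^ a * p ^ d + p ^ d + p ^ a"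
      using eq' dvd[of "Suc a" c] by (simp add: ac_simps)
    moreover have "p ^ Suc a dvd p ^ a * p ^ d + p ^ d"
      using dvd[of "Suc a" d] \<open>a < d\<close> by simp
    ultimately have "p ^ Suc a dvd p ^ a * 1" by (simp add: dvd_add_right_iff)
    then show ?thesis using p by (simp only: pow_Suc_dvd_pow_mult_iff) simp
  next
    case 4
    then have sum: "p ^ a * p ^ a + p ^ a * 2 = p ^ c" using eq' by simp
    have "0 < p ^ a" using p by simp
    then have "p ^ a * p ^ a < p ^ c" using sum by linarith
    then have "a + a < c" using p by (simp flip: power_add)
    then have "p ^ Suc a dvd p ^ a * p ^ a + p ^ a * 2" "p ^ Suc a dvd p ^ a * p ^ a"
      using sum dvd[of "Suc a"] \<open>0 < a\<close> by simp_all
    then have "p ^ Suc a dvd p ^ a * 2" by (simp add: dvd_add_right_iff)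
    then have "p dvd 2" using p by (simp add: pow_Suc_dvd_pow_mult_iff)
    then have "p = 2" using p by (simp add: dvd_prime_imp_eq)
    consider "a = 1" | "2 \<le> a" using \<open>0 < a\<close> by linarith
    then show ?thesis
    proof cases
      case 1
      then have "(2::nat) ^ c = 2 ^ 3" using sum \<open>p = 2\<close> by simp
      then show ?thesis using 1 4 \<open>p = 2\<close> power_inject_exp[of "2::nat" c 3] by simp
    next
      case 2
      then have "p ^ Suc (Suc a) dvd p ^ a * p ^ a"
        using dvd[of "Suc (Suc a)" "a + a"] by (simp add: power_add)
      moreover have "p ^ Suc (Suc a) dvd p ^ a * p ^ a + p ^ a * 2"
        using dvd[of "Suc (Suc a)" c] \<open>a + a < c\<close> 2 sum by simp
      ultimately have "p ^ Suc (Suc a) dvd p ^ Suc a * 1" using \<open>p = 2\<close> by (simp add: dvd_add_right_iff)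
      then show ?thesis using p by (simp only: pow_Suc_dvd_pow_mult_iff) simp
    qed
  qed
qed

lemma mult_pow_plus_one_eq_pow_minus_one:
  fixes p a c d :: nat
  assumes p: "1 < p" and "a \<le> d" and eq: "(p ^ a + 1) * (p ^ d + 1) + 1 = p ^ c"
  shows "(p = 5 \<and> a = 0 \<and> c = 1 \<and> d = 0) \<or> (p = 3 \<and> a = 0 \<and> c = 2 \<and> d = 1)
    \<or> (p = 2 \<and> a = 1 \<and> c = 4 \<and> d = 2)"
proof -
  have eq': "p ^ a * p ^ d + p ^ a + p ^ d + 2 = p ^ c" using eq by (simp add: algebra_simps)
  have "0 < c" using eq' p by (cases c) auto
  then have "p dvd p ^ c" by simp
  consider "a = 0" "d = 0" | "a = 0" "0 < d" | "0 < a" using \<open>a \<le> d\<close> by linarith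
  then show ?thesis
  proof cases
    case 1
    then have "p ^ c = 5" using eq' by simp
    then show ?thesis using pow_eq_prime_imp[OF p, of 5 c] 1 by simp
  next
    case 2
    then have sum: "2 * p ^ d + 3 = p ^ c" using eq' by simp
    then have "p dvd 2 * p ^ d + 3" "p dvd 2 * p ^ d"
      using \<open>p dvd p ^ c\<close> 2 by simp_all
    then have "p dvd 3" by (metis dvd_add_right_iff)
    then have "p = 3" using p by (simp add: dvd_prime_imp_eq)
    with sum have sum: "2 * 3 ^ d + 3 = (3::nat) ^ c" by simp
    consider "d = 1" | "2 \<le> d" using 2 by linarith
    then show ?thesis
    proof cases
      case 1
      then have "(3::nat) ^ c = 3 ^ 2" using sum by simp
      then show ?thesis using 1 2 \<open>p = 3\<close> power_inject_exp[of "3::nat" c 2] by simp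
    next
      case 2
      then have "9 dvd (3::nat) ^ d" using le_imp_power_dvd[of 2 d 3] by simp
      moreover from this have "9 \<le> (3::nat) ^ d" by (simp add: dvd_imp_le)
      then have "9 dvd (3::nat) ^ c"
        using pow_dvd_pow_of_le[of 3 2 c] sum by simp
      ultimately have False using sum by presburger
      then show ?thesis ..
    qed
  next
    case 3
    then have "p dvd p ^ a * p ^ d + p ^ a + p ^ d" using \<open>a \<le> d\<close> by simp
    then have "p dvd 2" using eq' \<open>p dvd p ^ c\<close> by (metis dvd_add_right_iff)
    then have "p = 2" using p by (simp add: dvd_prime_imp_eq)
    consider "a = 1" "d = 1" | "a = 1" "d = 2" | "a = 1" "3 \<le> d" | "2 \<le> a" "2 \<le> d"
      using 3 \<open>a \<le> d\<close> by linarith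
    then show ?thesis
    proof cases
      case 1
      then have "(2::nat) ^ c = 10" using eq' \<open>p = 2\<close> by simp
      moreover from this have "4 dvd (2::nat) ^ c" using pow_dvd_pow_of_le[of 2 2 c] by simp
      ultimately have False by presburger
      then show ?thesis ..
    next
      case 2
      then have "(2::nat) ^ c = 2 ^ 4" using eq' \<open>p = 2\<close> by simp
      then show ?thesis using 2 \<open>p = 2\<close> power_inject_exp[of "2::nat" c 4] by simp
    next
      case 3
      then have sum: "3 * (2::nat) ^ d + 4 = 2 ^ c" using eq' \<open>p = 2\<close> by simp
      have "8 dvd (2::nat) ^ d" using le_imp_power_dvd[of 3 d 2] 3 by simp
      moreover from this have "8 \<le> (2::nat) ^ d" by (simp add: dvd_imp_le)
      then have "8 dvd (2::nat) ^ c" using pow_dvd_pow_of_le[of 2 3 c] sum by simp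
      ultimately have False using sum by presburger
      then show ?thesis ..
    next
      case 4
      have "4 dvd (2::nat) ^ a" "4 dvd (2::nat) ^ d"
        using le_imp_power_dvd[of 2 _ "2::nat"] 4 by simp_all
      moreover from this have "4 dvd (2::nat) ^ a * 2 ^ d" by simp
      moreover have sum: "(2::nat) ^ a * 2 ^ d + 2 ^ a + 2 ^ d + 2 = 2 ^ c" using eq' \<open>p = 2\<close> by simp
      moreover have "(2::nat) ^ 2 \<le> 2 ^ a" using 4 by (simp only: power_increasing_iff)
      moreover from calculation have "4 dvd (2::nat) ^ c" using pow_dvd_pow_of_le[of 2 2 c] by simp
      ultimately have False by presburger
      then show ?thesis ..
    qed
  qed
qed

lemma pow_eq_pow_plus_two:
  fixes p c d :: nat
  assumes p: "1 < p" and eq: "p ^ c = p ^ d + 2"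
  shows "(p = 2 \<and> c = 2 \<and> d = 1) \<or> (p = 3 \<and> c = 1 \<and> d = 0)"
proof (cases "d = 0")
  case True
  then have "p ^ c = 3" using eq by simp
  then show ?thesis using pow_eq_prime_imp[OF p, of 3 c] True by simp
next
  case False
  have "0 < c" using eq p by (cases c) auto
  then have "p dvd p ^ c" by simp
  then have "p dvd p ^ d + 2" by (simp only: eq)
  moreover have "p dvd p ^ d" using False by simp
  ultimately have "p dvd 2" by (metis dvd_add_right_iff)
  then have "p = 2" using p by (simp add: dvd_prime_imp_eq)
  with eq have eq2: "(2::nat) ^ c = 2 ^ d + 2" by simp
  consider "d = 1" | "2 \<le> d" using False by linarith
  then show ?thesis
  proof cases
    case 1
    then have "(2::nat) ^ c = 2 ^ 2" using eq2 by simp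
    then show ?thesis using 1 \<open>p = 2\<close> power_inject_exp[of "2::nat" c 2] by simp
  next
    case 2
    then have "4 dvd (2::nat) ^ d" using le_imp_power_dvd[of 2 d "2::nat"] by simp
    moreover from this have "4 \<le> (2::nat) ^ d" by (simp add: dvd_imp_le)
    then have "4 dvd (2::nat) ^ c" using pow_dvd_pow_of_le[of 2 2 c] eq2 by simp
    ultimately have False using eq2 by presburger
    then show ?thesis ..
  qed
qed

lemma plus_minus_common_quotient_two:
  fixes a b c d r :: nat
  assumes "2 \<le> r" "b < a" "d < c"
    and e1: "2 ^ a + 1 = r * (2 ^ b + 1)" and e2: "2 ^ c = r * (2 ^ d + 1) + 1"
  shows "a = 3 \<and> b = 1 \<and> c = 4 \<and> d = 2"
proof -
  \<comment> \<open>Naming the powers keeps every congruence argument below within linear arithmetic.\<close>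
  define A C X Y where "A = (2::nat) ^ a" "C = (2::nat) ^ c" "X = r * 2 ^ b" "Y = r * 2 ^ d"
  note defs = A_C_X_Y_def
  have e1': "A + 1 = X + r" and e2': "C = Y + r + 1"
    using e1 e2 by (simp_all add: defs algebra_simps)
  have A_dvd: "2 ^ k dvd A" if "k \<le> a" for k using that by (simp add: defs le_imp_power_dvd)
  have C_dvd: "2 ^ k dvd C" if "k \<le> c" for k using that by (simp add: defs le_imp_power_dvd)
  have X_dvd: "2 ^ k dvd X" if "k \<le> b" for k using that by (simp add: defs le_imp_power_dvd)
  have Y_dvd: "2 ^ k dvd Y" if "k \<le> d" for k using that by (simp add: defs le_imp_power_dvd)
  have "0 < A" by (simp add: defs)
  have C_dvd': "2 ^ k dvd C" if "2 ^ k \<le> C" for k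
    using that pow_dvd_pow_of_le[of 2 k c] by (simp add: defs)
  \<comment> \<open>Modulo 4 exactly one of \<open>b\<close>, \<open>d\<close> is 1; modulo 8 and 16 then \<open>b = 1\<close>, \<open>d = 2\<close>, \<open>a = 3\<close>.\<close>
  consider "b = 0" | "d = 0" | "2 \<le> b" "2 \<le> d" | "b = 1" "d = 1" | "b = 1" "d = 2"
    | "b = 1" "3 \<le> d" | "b = 2" "d = 1" | "3 \<le> b" "d = 1"
    by linarith
  then show ?thesis
  proof cases
    case 1
    then have "X = r" by (simp add: defs)
    moreover have "2 dvd A" using A_dvd[of 1] \<open>b < a\<close> by simp
    ultimately have False using e1' by presburger
    then show ?thesis ..
  next
    case 2
    then have "Y = r" by (simp add: defs)
    moreover have "2 dvd C" using C_dvd[of 1] \<open>d < c\<close> by simp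
    ultimately have False using e2' by presburger
    then show ?thesis ..
  next
    case 3
    then have "4 dvd A" "4 dvd C" "4 dvd X" "4 dvd Y"
      using A_dvd[of 2] C_dvd[of 2] X_dvd[of 2] Y_dvd[of 2] \<open>b < a\<close> \<open>d < c\<close> by simp_all
    then have False using e1' e2' by presburger
    then show ?thesis ..
  next
    case 4
    then have "C = A + 2" using e1' e2' by (simp add: defs)
    moreover have "4 dvd A" "4 dvd C" using A_dvd[of 2] C_dvd[of 2] 4 \<open>b < a\<close> \<open>d < c\<close> by simp_all
    ultimately have False by presburger
    then show ?thesis ..
  next
    case 5
    then have r: "A + 1 = 3 * r" "C = 5 * r + 1" using e1' e2' by (simp_all add: defs)
    then have elim: "5 * A + 8 = 3 * C" by linarith
    consider "a = 2" | "a = 3" | "4 \<le> a" using 5 \<open>b < a\<close> by linarith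
    then show ?thesis
    proof cases
      case 1
      then have "3 * r = 5" using r by (simp add: defs)
      then show ?thesis by presburger
    next
      case 2
      then have "C = 2 ^ 4" using r by (simp add: defs)
      then show ?thesis using 2 5 power_inject_exp[of "2::nat" c 4] by (simp add: defs)
    next
      case 3
      then have "16 dvd A" using A_dvd[of 4] by simp
      moreover from this have "16 \<le> A" using \<open>0 < A\<close> by (simp add: dvd_imp_le)
      then have "16 dvd C" using C_dvd'[of 4] elim by simp
      ultimately have "16 dvd 5 * A + 8" "16 dvd 5 * A" using elim by (metis dvd_mult)+
      then have "16 dvd (8::nat)" by (simp add: dvd_add_right_iff)
      then show ?thesis by simp
    qed
  next
    case 6
    then have "X = 2 * r" "8 dvd Y" using Y_dvd[of 3] by (simp_all add: defs)
    moreover have "8 dvd C" using C_dvd[of 3] 6 \<open>d < c\<close> by simp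
    moreover have "A = 4 \<or> 8 dvd A"
      using 6 \<open>b < a\<close> A_dvd[of 3] by (cases "a = 2") (simp_all add: defs)
    ultimately have False using e1' e2' by presburger
    then show ?thesis ..
  next
    case 7
    then have r: "A + 1 = 5 * r" "C = 3 * r + 1" using e1' e2' by (simp_all add: defs)
    then have elim: "3 * A + 8 = 5 * C" by linarith
    consider "a = 3" | "4 \<le> a" using 7 \<open>b < a\<close> by linarith
    then show ?thesis
    proof cases
      case 1
      then have "5 * r = 9" using r by (simp add: defs)
      then show ?thesis by presburger
    next
      case 2
      then have "16 dvd A" using A_dvd[of 4] by simp
      moreover from this have "16 \<le> A" using \<open>0 < A\<close> by (simp add: dvd_imp_le)
      then have "(2::nat) ^ 3 < 2 ^ c" using elim by (simp add: defs)
      then have "16 dvd C" using C_dvd[of 4] by (simp only: power_strict_increasing_iff) simp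
      ultimately have "16 dvd 3 * A + 8" "16 dvd 3 * A" using elim by (metis dvd_mult)+
      then have "16 dvd (8::nat)" by (simp add: dvd_add_right_iff)
      then show ?thesis by simp
    qed
  next
    case 8
    then have "Y = 2 * r" "8 dvd X" "8 dvd A"
      using X_dvd[of 3] A_dvd[of 3] \<open>b < a\<close> by (simp_all add: defs)
    moreover have "4 dvd C" using C_dvd[of 2] 8 \<open>d < c\<close> by simp
    moreover from calculation have "8 \<le> C" using e2' \<open>2 \<le> r\<close> by presburger
    then have "8 dvd C" using C_dvd'[of 3] by simp
    ultimately have False using e1' e2' by presburger
    then show ?thesis ..
  qed
qed

lemma plus_minus_common_quotient_three:
  fixes a b c d r :: nat
  assumes "2 \<le> r" "b < a" "d < c"
    and e1: "3 ^ a + 1 = r * (3 ^ b + 1)" and e2: "3 ^ c = r * (3 ^ d + 1) + 1"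
  shows "a = 1 \<and> b = 0 \<and> c = 2 \<and> d = 1"
proof -
  define A C X Y where "A = (3::nat) ^ a" "C = (3::nat) ^ c" "X = r * 3 ^ b" "Y = r * 3 ^ d"
  note defs = A_C_X_Y_def
  have e1': "A + 1 = X + r" and e2': "C = Y + r + 1"
    using e1 e2 by (simp_all add: defs algebra_simps)
  have A_dvd: "3 ^ k dvd A" if "k \<le> a" for k using that by (simp add: defs le_imp_power_dvd)
  have C_dvd: "3 ^ k dvd C" if "k \<le> c" for k using that by (simp add: defs le_imp_power_dvd)
  have X_dvd: "3 ^ k dvd X" if "k \<le> b" for k using that by (simp add: defs le_imp_power_dvd)
  have Y_dvd: "3 ^ k dvd Y" if "k \<le> d" for k using that by (simp add: defs le_imp_power_dvd)
  \<comment> \<open>Modulo 3 one of \<open>b\<close>, \<open>d\<close> vanishes; modulo 9 then \<open>b = 0\<close>, \<open>d = 1\<close>, \<open>a = 1\<close>.\<close>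
  consider "1 \<le> b" "1 \<le> d" | "b = 0" "d = 0" | "b = 0" "d = 1" | "b = 0" "2 \<le> d"
    | "1 \<le> b" "d = 0"
    by linarith
  then show ?thesis
  proof cases
    case 1
    then have "3 dvd A" "3 dvd C" "3 dvd X" "3 dvd Y"
      using A_dvd[of 1] C_dvd[of 1] X_dvd[of 1] Y_dvd[of 1] \<open>b < a\<close> \<open>d < c\<close> by simp_all
    then have False using e1' e2' by presburger
    then show ?thesis ..
  next
    case 2
    then have "C = A + 2" using e1' e2' by (simp add: defs)
    moreover have "3 dvd A" "3 dvd C" using A_dvd[of 1] C_dvd[of 1] 2 \<open>b < a\<close> \<open>d < c\<close> by simp_all
    ultimately have False by presburger
    then show ?thesis ..
  next
    case 3
    then have elim: "C = 2 * A + 3" using e1' e2' by (simp add: defs)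
    show ?thesis
    proof (cases "a = 1")
      case True
      then have "C = 3 ^ 2" using elim by (simp add: defs)
      then show ?thesis using True 3 power_inject_exp[of "3::nat" c 2] by (simp add: defs)
    next
      case False
      then have "9 dvd A" "9 dvd C" using A_dvd[of 2] C_dvd[of 2] 3 \<open>b < a\<close> \<open>d < c\<close> by simp_all
      then have False using elim by presburger
      then show ?thesis ..
    qed
  next
    case 4
    then have "X = r" "9 dvd Y" "9 dvd C" using Y_dvd[of 2] C_dvd[of 2] \<open>d < c\<close> by (simp_all add: defs)
    moreover have "A = 3 \<or> 9 dvd A" using A_dvd[of 2] 4 \<open>b < a\<close> by (cases "a = 1") (simp_all add: defs)
    ultimately have False using e1' e2' by presburger
    then show ?thesis ..
  next
    case 5
    then have C: "C = 2 * r + 1" using e2' by (simp add: defs)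
    then have "(3::nat) ^ 1 < 3 ^ c" using \<open>2 \<le> r\<close> by (simp add: defs)
    then have "9 dvd C" using C_dvd[of 2] by (simp only: power_strict_increasing_iff) simp
    consider "b = 1" | "2 \<le> b" using 5 by linarith
    then show ?thesis
    proof cases
      case 1
      then have "A + 3 = 2 * C" using e1' C by (simp add: defs)
      moreover have "9 dvd A" using A_dvd[of 2] 1 \<open>b < a\<close> by simp
      ultimately have False using \<open>9 dvd C\<close> by presburger
      then show ?thesis ..
    next
      case 2
      then have "9 dvd X" "9 dvd A" using X_dvd[of 2] A_dvd[of 2] \<open>b < a\<close> by simp_all
      then have False using e1' C \<open>9 dvd C\<close> by presburger
      then show ?thesis ..
    qed
  qed
qed

lemma plus_minus_common_quotient_ge_two:
  fixes p a b c d r :: nat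
  assumes p: "1 < p" and "2 \<le> r"
    and e1: "p ^ a + 1 = r * (p ^ b + 1)" and e2: "p ^ c = r * (p ^ d + 1) + 1"
  shows "(p = 2 \<and> (a, b, c, d) = (3, 1, 4, 2)) \<or> (p = 3 \<and> (a, b, c, d) = (1, 0, 2, 1))"
proof -
  have "2 * (p ^ b + 1) \<le> p ^ a + 1"
    unfolding e1 by (rule mult_le_mono1[OF \<open>2 \<le> r\<close>])
  then have "p ^ b < p ^ a" by simp
  then have "b < a" using p by simp
  have "2 * (p ^ d + 1) + 1 \<le> p ^ c"
    unfolding e2 by (intro add_right_mono mult_le_mono1 \<open>2 \<le> r\<close>)
  then have "p ^ d < p ^ c" by simp
  then have "d < c" using p by simp
  have "(p ^ a + 1) * (p ^ d + 1) + (p ^ b + 1) = p ^ c * (p ^ b + 1)"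
    unfolding e1 e2 by (simp add: algebra_simps)
  then have "p ^ a * (p ^ d + 1) + (p ^ d + p ^ b + 2) = p ^ c * (p ^ b + 1)"
    by (simp add: algebra_simps)
  moreover have "p dvd p ^ a * (p ^ d + 1)" "p dvd p ^ c * (p ^ b + 1)"
    using \<open>b < a\<close> \<open>d < c\<close> by (auto intro!: dvd_mult2 dvd_power)
  ultimately have "p dvd p ^ d + p ^ b + 2" by (metis dvd_add_right_iff)
  have "p dvd 2 \<or> p dvd 3"
  proof -
    consider "0 < b" "0 < d" | "b = 0" "d = 0" | "b = 0" "0 < d" | "0 < b" "d = 0" by linarith
    then show ?thesis
    proof cases
      case 1
      then have "p dvd p ^ d + p ^ b" by simp
      then show ?thesis using \<open>p dvd p ^ d + p ^ b + 2\<close> by (metis dvd_add_right_iff)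
    next
      case 2
      then have "p ^ c = p ^ a + 2" using e1 e2 by simp
      moreover have "p dvd p ^ c" "p dvd p ^ a" using \<open>b < a\<close> \<open>d < c\<close> by (auto intro!: dvd_power)
      ultimately show ?thesis by (metis dvd_add_right_iff)
    next
      case 3
      then have "p dvd p ^ d + (p ^ b + 2)" "p dvd p ^ d"
        using \<open>p dvd p ^ d + p ^ b + 2\<close> by (simp_all add: add.assoc)
      then have "p dvd p ^ b + 2" by (metis dvd_add_right_iff)
      then show ?thesis using 3 by (simp add: numeral_3_eq_3)
    next
      case 4
      then have "p dvd p ^ b + (p ^ d + 2)" "p dvd p ^ b"
        using \<open>p dvd p ^ d + p ^ b + 2\<close> by (simp_all add: ac_simps)
      then have "p dvd p ^ d + 2" by (metis dvd_add_right_iff)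
      then show ?thesis using 4 by (simp add: numeral_3_eq_3)
    qed
  qed
  then consider "p = 2" | "p = 3" using p by (auto simp: dvd_prime_imp_eq)
  then show ?thesis
  proof cases
    case 1
    with e1 e2 have "a = 3 \<and> b = 1 \<and> c = 4 \<and> d = 2"
      using plus_minus_common_quotient_two[OF \<open>2 \<le> r\<close> \<open>b < a\<close> \<open>d < c\<close>] by simp
    with 1 show ?thesis by simp
  next
    case 2
    with e1 e2 have "a = 1 \<and> b = 0 \<and> c = 2 \<and> d = 1"
      using plus_minus_common_quotient_three[OF \<open>2 \<le> r\<close> \<open>b < a\<close> \<open>d < c\<close>] by simp
    with 2 show ?thesis by simp
  qed
qed

lemma plus_minus_common_quotient:
  fixes p a b c d r :: nat
  assumes p: "1 < p"
    and e1: "p ^ a + 1 = r * (p ^ b + 1)" and e2: "p ^ c = r * (p ^ d + 1) + 1"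
  shows "(p = 2 \<and> ((a = b \<and> c = 2 \<and> d = 1) \<or> (a, b, c, d) = (3, 1, 4, 2)))
    \<or> (p = 3 \<and> ((a = b \<and> c = 1 \<and> d = 0) \<or> (a, b, c, d) = (1, 0, 2, 1)))"
proof -
  have "r \<noteq> 0" using e1 by (metis add_is_0 mult_0 one_neq_zero)
  then consider "r = 1" | "2 \<le> r" by linarith
  then show ?thesis
  proof cases
    case 1
    then have "a = b" using e1 p by simp
    moreover have "p ^ c = p ^ d + 2" using e2 1 by simp
    ultimately show ?thesis using pow_eq_pow_plus_two[OF p] by auto
  next
    case 2
    then show ?thesis using plus_minus_common_quotient_ge_two[OF p 2 e1 e2] by auto
  qed
qed

section \<open>The five identities\<close>

lemma pow_mult_frac_eq_cancel:
  fixes p m n A B C D :: nat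
  assumes "0 < p" "0 < B" "0 < D" "\<not> p dvd A * D" "\<not> p dvd C * B"
    and eq: "real p ^ m * (real A / real B) = real p ^ n * (real C / real D)"
  shows "m = n \<and> A * D = C * B"
proof -
  have "real p ^ m * (real A * real D) = real p ^ n * (real C * real B)"
    using eq assms(2,3) by (simp add: field_simps)
  then have "p ^ m * (A * D) = p ^ n * (C * B)" by (metis of_nat_eq_iff of_nat_mult of_nat_power)
  then show ?thesis using pow_mult_eq_pow_mult_cancel assms(1,4,5) by blast
qed

lemma pow_mult_frac_Ints_imp_dvd:
  fixes p m A B :: nat
  assumes "coprime B p" "0 < B" and int: "real p ^ m * (real A / real B) \<in> \<int>"
  shows "B dvd A"
proof -
  obtain k where "real p ^ m * (real A / real B) = of_int k" using int by (elim Ints_cases)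
  then have "of_int (int (p ^ m * A)) = (of_int (k * int B) :: real)" using \<open>0 < B\<close> by (simp add: field_simps)
  then have "int B dvd int (p ^ m * A)" by (simp only: of_int_eq_iff) simp
  then have "B dvd p ^ m * A" by (simp only: of_nat_dvd_iff)
  then show ?thesis using \<open>coprime B p\<close> by (simp add: coprime_dvd_mult_right_iff)
qed

lemma prime_not_dvd_pow_plus_one:
  fixes p a :: nat
  assumes "prime p" "p = 2 \<longrightarrow> 0 < a"
  shows "\<not> p dvd p ^ a + 1"
  using assms dvd_pow_plus_one_iff[OF prime_gt_1_nat[OF assms(1)], of a] by blast

lemma prime_not_dvd_pow_minus_one:
  fixes p a :: nat
  assumes "prime p" "0 < a"
  shows "\<not> p dvd p ^ a - 1"
  using coprime_pow_minus_one[OF prime_gt_0_nat[OF assms(1)] assms(2)] assms(1)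
  by (metis coprime_common_divisor_nat dvd_refl not_prime_1)

lemma of_nat_pow_minus_one:
  fixes p a :: nat
  assumes "0 < p"
  shows "real (p ^ a - 1) = real p ^ a - 1"
  using assms by simp

lemma pow_minus_one_frac_pos_imp:
  fixes p m a b :: nat
  assumes "0 < real p ^ m * ((real p ^ a - 1) / (real p ^ b + 1))"
  shows "0 < a"
  using assms by (cases a) auto

lemma frac_plus_plus_eq:
  fixes p m n a b c d :: nat
  assumes p: "prime p" and pos: "p = 2 \<longrightarrow> 0 < a \<and> 0 < b \<and> 0 < c \<and> 0 < d"
    and eq: "real p ^ m * ((real p ^ a + 1) / (real p ^ b + 1))
      = real p ^ n * ((real p ^ c + 1) / (real p ^ d + 1))"
  shows "m = n \<and> ((a = b \<and> c = d) \<or> (a = c \<and> b = d))"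
proof -
  have nd: "\<not> p dvd p ^ x + 1" if "x \<in> {a, b, c, d}" for x
    using prime_not_dvd_pow_plus_one[OF p] pos that by auto
  have ndX: "\<not> p dvd (p ^ a + 1) * (p ^ d + 1)" and ndY: "\<not> p dvd (p ^ c + 1) * (p ^ b + 1)"
    unfolding prime_dvd_mult_iff[OF p] using nd by blast+
  have "real p ^ m * (real (p ^ a + 1) / real (p ^ b + 1))
      = real p ^ n * (real (p ^ c + 1) / real (p ^ d + 1))"
    using eq by (simp only: of_nat_add of_nat_power of_nat_1)
  from pow_mult_frac_eq_cancel[OF prime_gt_0_nat[OF p] _ _ ndX ndY this]
  have "m = n \<and> (p ^ a + 1) * (p ^ d + 1) = (p ^ c + 1) * (p ^ b + 1)" by simp
  then show ?thesis using pow_plus_one_mult_eq_cases[OF prime_gt_1_nat[OF p]] by blast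
qed

lemma frac_minus_minus_eq:
  fixes p m n a b c d :: nat
  assumes p: "prime p" and pos: "p = 2 \<longrightarrow> 0 < b \<and> 0 < d"
    and eq: "real p ^ m * ((real p ^ a - 1) / (real p ^ b + 1))
      = real p ^ n * ((real p ^ c - 1) / (real p ^ d + 1))"
    and int: "real p ^ m * ((real p ^ a - 1) / (real p ^ b + 1)) \<in> \<int>"
    and gt0: "real p ^ m * ((real p ^ a - 1) / (real p ^ b + 1)) > 0"
  shows "m = n \<and> a = c \<and> b = d"
proof -
  note p1 = prime_gt_1_nat[OF p] and p0 = prime_gt_0_nat[OF p]
  have "0 < a" using pow_minus_one_frac_pos_imp[OF gt0] .
  have "0 < c" using pow_minus_one_frac_pos_imp[of p n c d] gt0 eq by simp
  have nd: "\<not> p dvd p ^ x + 1" if "x \<in> {b, d}" for x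
    using prime_not_dvd_pow_plus_one[OF p] pos that by auto
  have ndX: "\<not> p dvd (p ^ a - 1) * (p ^ d + 1)" and ndY: "\<not> p dvd (p ^ c - 1) * (p ^ b + 1)"
    unfolding prime_dvd_mult_iff[OF p]
    using nd prime_not_dvd_pow_minus_one[OF p] \<open>0 < a\<close> \<open>0 < c\<close> by blast+
  have "real p ^ m * (real (p ^ a - 1) / real (p ^ b + 1))
      = real p ^ n * (real (p ^ c - 1) / real (p ^ d + 1))"
    using eq by (simp only: of_nat_pow_minus_one[OF p0] of_nat_add of_nat_power of_nat_1)
  from pow_mult_frac_eq_cancel[OF p0 _ _ ndX ndY this]
  have "m = n" and cross: "(p ^ a - 1) * (p ^ d + 1) = (p ^ c - 1) * (p ^ b + 1)" by simp_all
  have "real p ^ m * (real (p ^ a - 1) / real (p ^ b + 1)) \<in> \<int>"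
    using int by (simp only: of_nat_pow_minus_one[OF p0] of_nat_add of_nat_power of_nat_1)
  moreover have "coprime (p ^ b + 1) p"
    using prime_imp_coprime[OF p nd[of b]] by (simp add: coprime_commute)
  ultimately have "p ^ b + 1 dvd p ^ a - 1" by (intro pow_mult_frac_Ints_imp_dvd) simp_all
  then obtain r where r: "p ^ a - 1 = r * (p ^ b + 1)" by (auto simp: mult.commute)
  with cross have "(p ^ b + 1) * (p ^ c - 1) = (p ^ b + 1) * (r * (p ^ d + 1))"
    by (simp only: ac_simps)
  then have "p ^ c - 1 = r * (p ^ d + 1)" by (metis mult_left_cancel add_is_0 one_neq_zero)
  moreover have "1 < p ^ a" by (rule one_less_power[OF p1 \<open>0 < a\<close>])
  then have "0 < r" using r by (cases r) auto
  ultimately have "a = c \<and> b = d"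
    using pow_eq_Suc_mult_pow_plus_one_inj[OF p1 \<open>0 < r\<close>, of a b c d] r p0 by simp
  with \<open>m = n\<close> show ?thesis by simp
qed

lemma frac_plus_minus_eq:
  fixes p m n a b c d :: nat
  assumes p: "prime p" and pos: "p = 2 \<longrightarrow> 0 < a \<and> 0 < b \<and> 0 < d"
    and eq: "real p ^ m * ((real p ^ a + 1) / (real p ^ b + 1))
      = real p ^ n * ((real p ^ c - 1) / (real p ^ d + 1))"
    and int: "real p ^ m * ((real p ^ a + 1) / (real p ^ b + 1)) \<in> \<int>"
    and gt0: "real p ^ m * ((real p ^ a + 1) / (real p ^ b + 1)) > 0"
  shows "m = n \<and>
    ((p = 2 \<and> ((a = b \<and> c = 2 \<and> d = 1) \<or> (a, b, c, d) = (3, 1, 4, 2)))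
    \<or> (p = 3 \<and> ((a = b \<and> c = 1 \<and> d = 0) \<or> (a, b, c, d) = (1, 0, 2, 1))))"
proof -
  note p1 = prime_gt_1_nat[OF p] and p0 = prime_gt_0_nat[OF p]
  have "0 < c" using pow_minus_one_frac_pos_imp[of p n c d] gt0 eq by simp
  have nd: "\<not> p dvd p ^ x + 1" if "x \<in> {a, b, d}" for x
    using prime_not_dvd_pow_plus_one[OF p] pos that by auto
  have ndX: "\<not> p dvd (p ^ a + 1) * (p ^ d + 1)" and ndY: "\<not> p dvd (p ^ c - 1) * (p ^ b + 1)"
    unfolding prime_dvd_mult_iff[OF p]
    using nd prime_not_dvd_pow_minus_one[OF p \<open>0 < c\<close>] by blast+
  have "real p ^ m * (real (p ^ a + 1) / real (p ^ b + 1))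
      = real p ^ n * (real (p ^ c - 1) / real (p ^ d + 1))"
    using eq by (simp only: of_nat_pow_minus_one[OF p0] of_nat_add of_nat_power of_nat_1)
  from pow_mult_frac_eq_cancel[OF p0 _ _ ndX ndY this]
  have "m = n" and cross: "(p ^ a + 1) * (p ^ d + 1) = (p ^ c - 1) * (p ^ b + 1)" by simp_all
  have "real p ^ m * (real (p ^ a + 1) / real (p ^ b + 1)) \<in> \<int>"
    using int by (simp only: of_nat_add of_nat_power of_nat_1)
  moreover have "coprime (p ^ b + 1) p"
    using prime_imp_coprime[OF p nd[of b]] by (simp add: coprime_commute)
  ultimately have "p ^ b + 1 dvd p ^ a + 1" by (intro pow_mult_frac_Ints_imp_dvd) simp_all
  then obtain r where r: "p ^ a + 1 = r * (p ^ b + 1)" by (auto simp: mult.commute)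
  with cross have "(p ^ b + 1) * (p ^ c - 1) = (p ^ b + 1) * (r * (p ^ d + 1))"
    by (simp only: ac_simps)
  then have "p ^ c - 1 = r * (p ^ d + 1)" by (metis mult_left_cancel add_is_0 one_neq_zero)
  moreover have "1 \<le> p ^ c" using p0 by simp
  ultimately have "p ^ c = r * (p ^ d + 1) + 1" by arith
  with \<open>m = n\<close> show ?thesis using plus_minus_common_quotient[OF p1 r] by simp
qed

lemma frac_one_plus_eq:
  fixes p m n a c d :: nat
  assumes p: "prime p" and pos: "p = 2 \<longrightarrow> 0 < a \<and> 0 < c \<and> 0 < d"
    and eq: "real p ^ m * (real p ^ a + 1) = real p ^ n * ((real p ^ c + 1) / (real p ^ d + 1))"
  shows "m = n \<and> ((p = 3 \<and> (a, c, d) = (0, 1, 0)) \<or> (p = 2 \<and> (a, c, d) = (1, 3, 1)))"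
proof -
  note p1 = prime_gt_1_nat[OF p] and p0 = prime_gt_0_nat[OF p]
  have nd: "\<not> p dvd p ^ x + 1" if "x \<in> {a, c, d}" for x
    using prime_not_dvd_pow_plus_one[OF p] pos that by auto
  have ndX: "\<not> p dvd (p ^ a + 1) * (p ^ d + 1)" and ndY: "\<not> p dvd (p ^ c + 1) * 1"
    unfolding prime_dvd_mult_iff[OF p] using nd by auto
  have "real p ^ m * (real (p ^ a + 1) / real 1)
      = real p ^ n * (real (p ^ c + 1) / real (p ^ d + 1))"
    using eq by (simp only: of_nat_add of_nat_power of_nat_1 div_by_1)
  from pow_mult_frac_eq_cancel[OF p0 _ _ ndX ndY this]
  have "m = n" and prod: "(p ^ a + 1) * (p ^ d + 1) = p ^ c + 1" by simp_all
  have "(p = 3 \<and> a = 0 \<and> c = 1 \<and> d = 0) \<or> (p = 2 \<and> a = 1 \<and> c = 3 \<and> d = 1)"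
  proof (cases "a \<le> d")
    case True
    show ?thesis by (rule mult_pow_plus_one_eq_pow_plus_one[OF p1 True prod])
  next
    case False
    then have "d \<le> a" by simp
    moreover have "(p ^ d + 1) * (p ^ a + 1) = p ^ c + 1" using prod by (simp only: mult.commute)
    ultimately show ?thesis using mult_pow_plus_one_eq_pow_plus_one[OF p1] by auto
  qed
  with \<open>m = n\<close> show ?thesis by auto
qed

lemma frac_one_minus_eq:
  fixes p m n a c d :: nat
  assumes p: "prime p" and pos: "p = 2 \<longrightarrow> 0 < a \<and> 0 < d"
    and eq: "real p ^ m * (real p ^ a + 1) = real p ^ n * ((real p ^ c - 1) / (real p ^ d + 1))"
    and gt0: "real p ^ m * (real p ^ a + 1) > 0"
  shows "m = n \<and> ((p = 5 \<and> (a, c, d) = (0, 1, 0))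
    \<or> (p = 3 \<and> (a, c, d) \<in> {(0, 2, 1), (1, 2, 0)})
    \<or> (p = 2 \<and> (a, c, d) \<in> {(1, 4, 2), (2, 4, 1)}))"
proof -
  note p1 = prime_gt_1_nat[OF p] and p0 = prime_gt_0_nat[OF p]
  have "0 < c" using pow_minus_one_frac_pos_imp[of p n c d] gt0 eq by simp
  have nd: "\<not> p dvd p ^ x + 1" if "x \<in> {a, d}" for x
    using prime_not_dvd_pow_plus_one[OF p] pos that by auto
  have ndX: "\<not> p dvd (p ^ a + 1) * (p ^ d + 1)" and ndY: "\<not> p dvd (p ^ c - 1) * 1"
    unfolding prime_dvd_mult_iff[OF p] using nd prime_not_dvd_pow_minus_one[OF p \<open>0 < c\<close>] by auto
  have "real p ^ m * (real (p ^ a + 1) / real 1)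
      = real p ^ n * (real (p ^ c - 1) / real (p ^ d + 1))"
    using eq by (simp only: of_nat_pow_minus_one[OF p0] of_nat_add of_nat_power of_nat_1 div_by_1)
  from pow_mult_frac_eq_cancel[OF p0 _ _ ndX ndY this]
  have "m = n" and "(p ^ a + 1) * (p ^ d + 1) = p ^ c - 1" by simp_all
  moreover have "1 \<le> p ^ c" using p0 by simp
  ultimately have prod: "(p ^ a + 1) * (p ^ d + 1) + 1 = p ^ c" by arith
  have "(p = 5 \<and> a = 0 \<and> c = 1 \<and> d = 0) \<or> (p = 3 \<and> ((a, c, d) = (0, 2, 1) \<or> (a, c, d) = (1, 2, 0)))
    \<or> (p = 2 \<and> ((a, c, d) = (1, 4, 2) \<or> (a, c, d) = (2, 4, 1)))"
  proof (cases "a \<le> d")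
    case True
    then show ?thesis using mult_pow_plus_one_eq_pow_minus_one[OF p1 True prod] by auto
  next
    case False
    then have "d \<le> a" by simp
    moreover have "(p ^ d + 1) * (p ^ a + 1) + 1 = p ^ c" using prod by (simp only: mult.commute)
    ultimately show ?thesis using mult_pow_plus_one_eq_pow_minus_one[OF p1] by auto
  qed
  with \<open>m = n\<close> show ?thesis by auto
qed

theorem mainTheorem11:
  fixes p m n a b c d :: nat
  assumes "prime p"
    and "p = 2 \<longrightarrow> 0 < a \<and> 0 < b \<and> 0 < c \<and> 0 < d"
  shows
   "(real p ^ m * ((real p ^ a + 1) / (real p ^ b + 1)) = real p ^ n * ((real p ^ c + 1) / (real p ^ d + 1))
     \<and> real p ^ m * ((real p ^ a + 1) / (real p ^ b + 1)) \<in> \<int>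
     \<and> real p ^ m * ((real p ^ a + 1) / (real p ^ b + 1)) > 0
     \<longrightarrow> m = n \<and> ((a = b \<and> c = d) \<or> (a = c \<and> b = d)))
  \<and> (real p ^ m * ((real p ^ a - 1) / (real p ^ b + 1)) = real p ^ n * ((real p ^ c - 1) / (real p ^ d + 1))
     \<and> real p ^ m * ((real p ^ a - 1) / (real p ^ b + 1)) \<in> \<int>
     \<and> real p ^ m * ((real p ^ a - 1) / (real p ^ b + 1)) > 0
     \<longrightarrow> m = n \<and> a = c \<and> b = d)
  \<and> (real p ^ m * ((real p ^ a + 1) / (real p ^ b + 1)) = real p ^ n * ((real p ^ c - 1) / (real p ^ d + 1))
     \<and> real p ^ m * ((real p ^ a + 1) / (real p ^ b + 1)) \<in> \<int>
     \<and> real p ^ m * ((real p ^ a + 1) / (real p ^ b + 1)) > 0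
     \<longrightarrow> m = n \<and>
        ((p = 2 \<and> ((a = b \<and> c = 2 \<and> d = 1) \<or> (a, b, c, d) = (3, 1, 4, 2)))
       \<or> (p = 3 \<and> ((a = b \<and> c = 1 \<and> d = 0) \<or> (a, b, c, d) = (1, 0, 2, 1)))))
  \<and> (real p ^ m * (real p ^ a + 1) = real p ^ n * ((real p ^ c + 1) / (real p ^ d + 1))
     \<and> real p ^ m * (real p ^ a + 1) \<in> \<int>
     \<and> real p ^ m * (real p ^ a + 1) > 0
     \<longrightarrow> m = n \<and>
        ((p = 3 \<and> (a, c, d) = (0, 1, 0)) \<or> (p = 2 \<and> (a, c, d) = (1, 3, 1))))
  \<and> (real p ^ m * (real p ^ a + 1) = real p ^ n * ((real p ^ c - 1) / (real p ^ d + 1))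
     \<and> real p ^ m * (real p ^ a + 1) \<in> \<int>
     \<and> real p ^ m * (real p ^ a + 1) > 0
     \<longrightarrow> m = n \<and>
        ((p = 5 \<and> (a, c, d) = (0, 1, 0))
       \<or> (p = 3 \<and> (a, c, d) \<in> {(0, 2, 1), (1, 2, 0)})
       \<or> (p = 2 \<and> (a, c, d) \<in> {(1, 4, 2), (2, 4, 1)})))"
proof -
  have pos2: "p = 2 \<longrightarrow> 0 < b \<and> 0 < d" and pos3: "p = 2 \<longrightarrow> 0 < a \<and> 0 < b \<and> 0 < d"
    and pos4: "p = 2 \<longrightarrow> 0 < a \<and> 0 < c \<and> 0 < d" and pos5: "p = 2 \<longrightarrow> 0 < a \<and> 0 < d"
    using assms(2) by simp_all
  show ?thesis
    by (intro conjI[of "_ \<longrightarrow> _"] impI; elim conjE;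
        rule frac_plus_plus_eq[OF assms] frac_minus_minus_eq[OF assms(1) pos2]
          frac_plus_minus_eq[OF assms(1) pos3] frac_one_plus_eq[OF assms(1) pos4]
          frac_one_minus_eq[OF assms(1) pos5];
        assumption)
qed

end
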